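(* Let $n,m,\ell\in\mathbb{N}$ with $\ell\geq\lceil\log_2 8n\rceil$, and let $w>1$ be a number representable with $n$ bits of which the first $m$ are its integer part. Let $b=\max\{5\ell,25\}$, let $p\in\mathbb{N}$ with $2^p>w\geq 2^{p-1}$, and let $r$ be a number with $|r-\ln 2|\leq 2^{-b}$. Then the value $\hat{z}=z_p+(p-1)r$ returned by Algorithm LN$(w,n,m,\ell)$ (described in the context, using this $r$) satisfies $$|\hat{z}-\ln w|\leq\left(\frac{3}{4}\right)^{5\ell/2}\left(m+\frac{32}{9}+2\left(\frac{32}{9}+\frac{n}{\ln 2}\right)^3\right).$$
   Context: Fixed precision representation: a number $w\ge 0$ "given by $n$ bits of which the first $m$ correspond to its integer part" means $w=\sum_{j=m-n}^{m-1} w^{(j)}2^j$ with $w^{(j)}\in\{0,1\}$. For $x\geq 0$, "truncating $x$ to $b$ bits after the binary point" means replacing $x$ by $\lfloor 2^b x\rfloor/2^b$. All arithmetic inside a step is performed exactly; only the stated truncations introduce error. Algorithm SQRT$(w,n,m,b)$ (input $w\geq 1$): if $w=1$, return $1$. Otherwise: let $p'\in\mathbb{N}$ with $2^{p'}>w\geq 2^{p'-1}$ and set $\hat{x}_0=2^{-p'}$; let $s=\lceil\log_2 b\rceil$; for $i=1,\dots,s$ compute exactly $x_i=-w\hat{x}_{i-1}^2+2\hat{x}_{i-1}$ and let $\hat{x}_i$ be $x_i$ truncated to $b$ bits after the binary point. Then let $q\in\mathbb{N}$ with $2^{1-q}>\hat{x}_s\geq 2^{-q}$ and set $\hat{y}_0=2^{\lfloor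 (q-1)/2\rfloor}$; for $j=1,\dots,s$ compute exactly $y_j=\frac12(3\hat{y}_{j-1}-\hat{x}_s\hat{y}_{j-1}^3)$ and let $\hat{y}_j$ be $y_j$ truncated to $b$ bits. Return $\hat{y}_s$. Algorithm PowerOf2Roots$(w,k,n,m,b)$: set $\hat{z}_1=$ SQRT$(w,n,m,b)$; for $i=2,\dots,k$ set $\hat{z}_i=$ SQRT$(\hat{z}_{i-1},m+b,m,b)$. Return $\hat{z}_1,\dots,\hat{z}_k$. Algorithm LN$(w,n,m,\ell)$ (input $w\geq 1$): set $b=\max\{5\ell,25\}$ and let $r$ be a $b$-bit approximation of $\ln 2$ with $|r-\ln 2|\le 2^{-b}$. If $w=1$ return $0$. Let $p\in\mathbb{N}$ with $2^p>w\geq 2^{p-1}$ and set $w_p=2^{1-p}w\in[1,2)$ (computed exactly, represented with $n$ bits of which $1$ is integer). If $w_p=1$, set $z_p=0$. Otherwise let $\hat{t}_p$ be the last output $\hat{z}_\ell$ of PowerOf2Roots$(w_p,\ell,n,1,b)$, let $\hat{y}_p$ be $(\hat{t}_p-1)-\frac12(\hat{t}_p-1)^2$ truncated to $b$ bits after the binary point, and set $z_p=2^\ell\hat{y}_p$. Return $z_p+(p-1)r$. *)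

theory Defs
  imports Complex_Main
begin

definition fixed_repr :: "nat \<Rightarrow> nat \<Rightarrow> real \<Rightarrow> bool" where
  "fixed_repr n m w \<longleftrightarrow>
     (\<exists>d :: int \<Rightarrow> real. (\<forall>j. d j \<in> {0, 1}) \<and>
        w = (\<Sum>j\<in>{int m - int n .. int m - 1}. d j * 2 powr (real_of_int j)))"

definition trunc_bits :: "nat \<Rightarrow> real \<Rightarrow> real" where
  "trunc_bits b x = real_of_int \<lfloor>2 ^ b * x\<rfloor> / 2 ^ b"

text \<open>Algorithm SQRT (the parameters n, m only describe the input format and do not
  influence the computation).\<close>
definition SQRT :: "nat \<Rightarrow> real \<Rightarrow> real" where
  "SQRT b w =
    (if w = 1 then 1 else
      (let p' = (THE p'::nat. 2 ^ p' > w \<and> w \<ge> 2 ^ (p' - 1));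
           s = nat \<lceil>log 2 (real b)\<rceil>;
           xs = ((\<lambda>x. trunc_bits b (- w * x\<^sup>2 + 2 * x)) ^^ s) (2 powr (- real p'));
           q = (THE q::nat. 2 powr (1 - real q) > xs \<and> xs \<ge> 2 powr (- real q));
           y0 = 2 powr (real_of_int \<lfloor>(real q - 1) / 2\<rfloor>)
       in ((\<lambda>y. trunc_bits b ((3 * y - xs * y ^ 3) / 2)) ^^ s) y0))"

definition PowerOf2Roots :: "nat \<Rightarrow> real \<Rightarrow> nat \<Rightarrow> real" where
  "PowerOf2Roots b w i = (SQRT b ^^ i) w"

text \<open>Algorithm LN, with the b-bit approximation r of ln 2 supplied as a parameter.\<close>
definition LN :: "real \<Rightarrow> nat \<Rightarrow> real \<Rightarrow> real" where
  "LN w l r =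
    (let b = max (5 * l) 25 in
     if w = 1 then 0 else
      (let p = (THE p::nat. 2 ^ p > w \<and> w \<ge> 2 ^ (p - 1));
           wp = 2 powr (1 - real p) * w;
           zp = (if wp = 1 then 0 else
                  (let t = PowerOf2Roots b wp l;
                       y = trunc_bits b ((t - 1) - (t - 1)\<^sup>2 / 2)
                   in 2 ^ l * y))
       in zp + (real p - 1) * r))"

end

theory Submission
  imports Defs
begin

text \<open>Write \<open>w = 2^(p-1) x\<close> with \<open>1 \<le> x < 2\<close>, so that
  \<open>ln w = (p - 1) ln 2 + ln x\<close> and the approximation \<open>r\<close> of \<open>ln 2\<close> costs
  \<open>(p - 1) 2^-b\<close>. Algorithm SQRT first runs Newton's iteration for \<open>1/w\<close> and then
  Newton's iteration for the inverse square root of the result; both errors are squared in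
  each step up to the rounding error \<open>2^-b\<close>, so \<open>\<lceil>log\<^sub>2 b\<rceil>\<close> steps bring \<open>ln\<close> of
  the output within \<open>30 \<cdot> 2^-b\<close> of half the \<open>ln\<close> of the input. After \<open>l\<close> square roots
  the computed \<open>t \<approx> x^(1/2^l)\<close> thus satisfies \<open>|2^l ln t - ln x| \<le> 60 \<cdot> 2^(l-b)\<close>,
  hence \<open>2^l (t - 1) \<le> 3\<close>, and the second order Taylor polynomial of \<open>ln (1 + u)\<close> at
  \<open>u = t - 1\<close> is off by at most \<open>2^l u^3/3 \<le> 9 \<cdot> 4^-l\<close>. With \<open>b \<ge> 5 l\<close> every
  error is \<open>O(4^-l)\<close>.\<close>

lemma trunc_bits_le: "trunc_bits b x \<le> x"
proof -
  have "real_of_int \<lfloor>2 ^ b * x\<rfloor> \<le> 2 ^ b * x" by simp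
  then show ?thesis unfolding trunc_bits_def by (simp add: divide_le_eq mult.commute)
qed

lemma trunc_bits_gt: "x - 1 / 2 ^ b < trunc_bits b x"
proof -
  have "2 ^ b * x - 1 < real_of_int \<lfloor>2 ^ b * x\<rfloor>" by linarith
  then have "(2 ^ b * x - 1) / 2 ^ b < real_of_int \<lfloor>2 ^ b * x\<rfloor> / 2 ^ b"
    by (simp add: divide_strict_right_mono)
  then show ?thesis unfolding trunc_bits_def by (simp add: diff_divide_distrib)
qed

lemma trunc_bits_error: "\<bar>trunc_bits b x - x\<bar> \<le> 1 / 2 ^ b"
  using trunc_bits_le[of b x] trunc_bits_gt[of x b] by linarith

lemma trunc_bits_mono: "x \<le> y \<Longrightarrow> trunc_bits b x \<le> trunc_bits b y"
  unfolding trunc_bits_def by (simp add: divide_right_mono floor_mono)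

lemma trunc_bits_of_int: "2 ^ b * x = of_int k \<Longrightarrow> trunc_bits b x = x"
proof -
  assume "2 ^ b * x = of_int k"
  then have "x = of_int k / 2 ^ b" by (simp add: field_simps)
  then show ?thesis unfolding trunc_bits_def by simp
qed

lemma trunc_bits_idem: "trunc_bits b (trunc_bits b x) = trunc_bits b x"
  by (rule trunc_bits_of_int[where k = "\<lfloor>2 ^ b * x\<rfloor>"]) (simp add: trunc_bits_def)

lemma trunc_bits_one: "trunc_bits b 1 = 1"
  by (rule trunc_bits_of_int[where k = "2 ^ b"]) simp

lemma trunc_bits_half: "1 \<le> b \<Longrightarrow> trunc_bits b (1 / 2) = 1 / 2"
  by (rule trunc_bits_of_int[where k = "2 ^ (b - 1)"]) (cases b, simp_all)

lemma trunc_bits_ge_fixpoint: "x \<le> y \<Longrightarrow> trunc_bits b x = x \<Longrightarrow> x \<le> trunc_bits b y"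
  using trunc_bits_mono by metis

lemma ln_add_one_ge:
  fixes u :: real assumes "0 \<le> u" shows "u - u ^ 2 / 2 \<le> ln (1 + u)"
proof -
  let ?f = "\<lambda>u. ln (1 + u) - u + u ^ 2 / 2"
  have "?f 0 \<le> ?f u"
  proof (rule DERIV_nonneg_imp_nondecreasing[OF assms])
    fix x :: real assume x: "0 \<le> x"
    show "\<exists>y. (?f has_real_derivative y) (at x) \<and> 0 \<le> y"
    proof (intro exI conjI)
      show "(?f has_real_derivative (1 / (1 + x) - 1 + x)) (at x)"
        using x by (auto intro!: derivative_eq_intros)
      have "1 / (1 + x) - 1 + x = x ^ 2 / (1 + x)"
        using x by (simp add: field_simps power2_eq_square)
      then show "0 \<le> 1 / (1 + x) - 1 + x" using x by simp
    qed
  qed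
  then show ?thesis by simp
qed

lemma ln_add_one_le:
  fixes u :: real assumes "0 \<le> u" shows "ln (1 + u) \<le> u - u ^ 2 / 2 + u ^ 3 / 3"
proof -
  let ?f = "\<lambda>u. u - u ^ 2 / 2 + u ^ 3 / 3 - ln (1 + u)"
  have "?f 0 \<le> ?f u"
  proof (rule DERIV_nonneg_imp_nondecreasing[OF assms])
    fix x :: real assume x: "0 \<le> x"
    show "\<exists>y. (?f has_real_derivative y) (at x) \<and> 0 \<le> y"
    proof (intro exI conjI)
      show "(?f has_real_derivative (1 - x + x ^ 2 - 1 / (1 + x))) (at x)"
        using x by (auto intro!: derivative_eq_intros)
      have "1 - x + x ^ 2 - 1 / (1 + x) = x ^ 3 / (1 + x)"
        using x by (simp add: field_simps power2_eq_square power3_eq_cube)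
      then show "0 \<le> 1 - x + x ^ 2 - 1 / (1 + x)" using x by simp
    qed
  qed
  then show ?thesis by simp
qed

lemma diff_one_le_mult_ln:
  fixes t :: real assumes "1 \<le> t" shows "t - 1 \<le> t * ln t"
proof -
  have "ln (1 / t) \<le> 1 / t - 1" using assms by (intro ln_le_minus_one) auto
  then have "1 - 1 / t \<le> ln t" using assms by (simp add: ln_div)
  then show ?thesis using assms by (simp add: field_simps)
qed

lemma minus_ln_one_minus_le:
  fixes e :: real assumes "0 \<le> e" "e \<le> 1 / 2" shows "- ln (1 - e) \<le> 2 * e"
proof -
  have "e * e \<le> e * (1 / 2)" using assms by (intro mult_left_mono) auto
  then have "e ^ 2 \<le> e / 2" by (simp add: power2_eq_square)
  with ln_one_minus_pos_lower_bound[OF assms] show ?thesis by linarith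
qed

lemma quadratic_recurrence_bound:
  fixes a :: "nat \<Rightarrow> real" and \<theta> d :: real
  assumes \<theta>: "0 \<le> \<theta>" "\<theta> \<le> 9 / 20" and d: "0 \<le> d" "d \<le> 1 / 10000"
    and nonneg: "\<And>i. 0 \<le> a i" and start: "a 0 \<le> \<theta> + 21 * d"
    and step: "\<And>i. a (Suc i) \<le> a i ^ 2 + 2 * d"
  shows "a i \<le> \<theta> ^ 2 ^ i + 21 * d"
proof (induction i)
  case 0 then show ?case using start by simp
next
  case (Suc i)
  define h where "h = \<theta> ^ 2 ^ i"
  have h: "0 \<le> h" "h \<le> 9 / 20"
    using \<theta> power_decreasing[of 1 "2 ^ i" \<theta>] by (auto simp: h_def)
  have "a i ^ 2 \<le> (h + 21 * d) ^ 2"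
    using Suc nonneg[of i] by (intro power_mono) (auto simp: h_def)
  also have "\<dots> = h ^ 2 + 42 * h * d + 441 * d * d" by (simp add: power2_eq_square algebra_simps)
  also have "\<dots> \<le> h ^ 2 + 42 * (9 / 20) * d + 441 * (1 / 10000) * d"
    using h d by (intro add_mono mult_right_mono mult_left_mono order.refl) auto
  finally have "a (Suc i) \<le> h ^ 2 + 21 * d" using step[of i] d by linarith
  then show ?case by (simp add: h_def power_mult[symmetric] mult.commute)
qed

lemma half_pow_ceiling_log_le:
  assumes "1 \<le> b" shows "(1 / 2 :: real) ^ 2 ^ nat \<lceil>log 2 (real b)\<rceil> \<le> 1 / 2 ^ b"
proof -
  define k where "k = nat \<lceil>log 2 (real b)\<rceil>"
  have "log 2 (real b) \<le> real k" unfolding k_def using assms by linarith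
  then have "2 powr log 2 (real b) \<le> 2 powr real k" by (intro powr_mono) auto
  then have "real b \<le> 2 powr real k" using assms by simp
  then have "b \<le> 2 ^ k" by (simp add: powr_realpow flip: of_nat_le_iff)
  then have "(1 / 2 :: real) ^ 2 ^ k \<le> (1 / 2) ^ b" by (intro power_decreasing) auto
  then show ?thesis by (simp add: k_def power_one_over)
qed

lemma binary_exponent_exists:
  fixes w :: real assumes "1 \<le> w" obtains p :: nat where "2 ^ (p - 1) \<le> w" "w < 2 ^ p"
proof -
  obtain k :: nat where k: "w < 2 ^ k" using real_arch_pow[of 2 w] by auto
  define p where "p = (LEAST k::nat. w < 2 ^ k)"
  have "w < 2 ^ p" unfolding p_def by (rule LeastI[of _ k]) (rule k)
  moreover have "p \<noteq> 0" using \<open>w < 2 ^ p\<close> assms by (cases p) auto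
  then have "\<not> w < 2 ^ (p - 1)" unfolding p_def by (intro not_less_Least) (simp add: p_def)
  ultimately show ?thesis using that by (simp add: not_less)
qed

lemma the_binary_exponent:
  fixes w :: real assumes "2 ^ (p - 1) \<le> w" "w < 2 ^ p"
  shows "(THE p :: nat. 2 ^ p > w \<and> w \<ge> 2 ^ (p - 1)) = p"
proof (rule the_equality)
  fix q :: nat assume q: "2 ^ q > w \<and> w \<ge> 2 ^ (q - 1)"
  have "(2::real) ^ (p - 1) < 2 ^ q" "(2::real) ^ (q - 1) < 2 ^ p" using assms q by linarith+
  then have "p - 1 < q" "q - 1 < p" by (simp_all add: power_strict_increasing_iff)
  moreover have "p \<noteq> 0" using assms by (cases p) auto
  moreover have "q \<noteq> 0" using q by (cases q) auto
  ultimately show "q = p" by linarith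
qed (use assms in simp)

definition reciprocal_step :: "nat \<Rightarrow> real \<Rightarrow> real \<Rightarrow> real" where
  "reciprocal_step b w x = trunc_bits b (- w * x\<^sup>2 + 2 * x)"

definition invsqrt_step :: "nat \<Rightarrow> real \<Rightarrow> real \<Rightarrow> real" where
  "invsqrt_step b x y = trunc_bits b ((3 * y - x * y ^ 3) / 2)"

text \<open>Exact Newton steps for \<open>1/w\<close> approach it monotonically from below, since
  \<open>1/w - (2x - w x\<^sup>2) = (1 - w x)\<^sup>2 / w\<close>; rounding down to a grid that
  contains \<open>x\<close> preserves this.\<close>
lemma reciprocal_step_bounds:
  assumes w: "0 < w" and x: "0 \<le> x" "x \<le> 1 / w" "trunc_bits b x = x"
  shows "x \<le> reciprocal_step b w x" "reciprocal_step b w x \<le> 1 / w"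
    "trunc_bits b (reciprocal_step b w x) = reciprocal_step b w x"
proof -
  define f where "f = - w * x\<^sup>2 + 2 * x"
  have "1 / w - f = (1 - w * x)\<^sup>2 / w" using w by (simp add: f_def field_simps power2_eq_square)
  moreover have "0 \<le> (1 - w * x)\<^sup>2 / w" using w by simp
  moreover have "f - x = x * (1 - w * x)" by (simp add: f_def algebra_simps power2_eq_square)
  moreover have "0 \<le> x * (1 - w * x)" using w x by (intro mult_nonneg_nonneg) (simp_all add: field_simps)
  ultimately have "f \<le> 1 / w" "x \<le> f" by linarith+
  then show "x \<le> reciprocal_step b w x" "reciprocal_step b w x \<le> 1 / w"
    using x(3) trunc_bits_ge_fixpoint[of x f b] trunc_bits_le[of b f]
    by (auto simp: reciprocal_step_def f_def)
qed (simp add: reciprocal_step_def trunc_bits_idem)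

lemma reciprocal_step_error:
  assumes "0 \<le> w" "w \<le> 2"
  shows "1 - w * reciprocal_step b w x \<le> (1 - w * x)\<^sup>2 + 2 / 2 ^ b"
proof -
  define f where "f = - w * x\<^sup>2 + 2 * x"
  have "w * (f - 1 / 2 ^ b) \<le> w * reciprocal_step b w x"
    using assms trunc_bits_gt[of f b] by (intro mult_left_mono) (auto simp: reciprocal_step_def f_def)
  moreover have "1 - w * f = (1 - w * x)\<^sup>2" by (simp add: f_def algebra_simps power2_eq_square)
  moreover have "w * (1 / 2 ^ b) \<le> 2 / 2 ^ b" using assms by (simp add: divide_right_mono)
  ultimately show ?thesis by (simp add: right_diff_distrib)
qed

lemma reciprocal_iteration:
  fixes w :: real and b :: nat
  defines "x \<equiv> (reciprocal_step b w ^^ nat \<lceil>log 2 (real b)\<rceil>) (1 / 2)"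
  assumes w: "1 \<le> w" "w \<le> 2" and b: "25 \<le> b"
  shows "1 / 2 \<le> x" "x \<le> 1 / w" "1 - w * x \<le> 22 / 2 ^ b"
proof -
  define X where "X i = (reciprocal_step b w ^^ i) (1 / 2)" for i
  define s where "s = nat \<lceil>log 2 (real b)\<rceil>"
  have X_Suc: "X (Suc i) = reciprocal_step b w (X i)" for i by (simp add: X_def)
  have inv: "1 / 2 \<le> X i \<and> X i \<le> 1 / w \<and> trunc_bits b (X i) = X i" for i
  proof (induction i)
    case 0 show ?case using w b by (simp add: X_def trunc_bits_half field_simps)
  next
    case (Suc i) then show ?case
      using reciprocal_step_bounds[of w "X i" b] w by (auto simp: X_Suc)
  qed
  then show "1 / 2 \<le> x" "x \<le> 1 / w" by (auto simp: x_def X_def)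
  define d :: real where "d = 1 / 2 ^ b"
  have d: "0 \<le> d" "d \<le> 1 / 10000" using power_increasing[of 25 b "2::real"] b
    by (auto simp: d_def field_simps)
  have "s \<noteq> 0" using half_pow_ceiling_log_le[of b] b by (auto simp: s_def field_simps)
  have "1 - w * X (Suc (s - 1)) \<le> (1 / 4) ^ 2 ^ (s - 1) + 21 * d"
  proof (rule quadratic_recurrence_bound[where a = "\<lambda>i. 1 - w * X (Suc i)"])
    show "0 \<le> 1 - w * X (Suc i)" for i using inv[of "Suc i"] w by (simp add: field_simps)
    show "1 - w * X (Suc (Suc i)) \<le> (1 - w * X (Suc i))\<^sup>2 + 2 * d" for i
      using reciprocal_step_error[of w b] w by (simp add: X_Suc d_def)
    have "(1 - w / 2)\<^sup>2 \<le> (1 / 2)\<^sup>2" using w by (intro power_mono) auto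
    moreover have "2 * d \<le> 21 * d" using d by simp
    ultimately show "1 - w * X (Suc 0) \<le> 1 / 4 + 21 * d"
      using reciprocal_step_error[of w b "1 / 2"] w d by (simp add: X_def d_def power2_eq_square)
  qed (use d in auto)
  also have "(1 / 4 :: real) ^ 2 ^ (s - 1) = (1 / 2) ^ 2 ^ s"
    using \<open>s \<noteq> 0\<close> by (cases s) (simp_all add: power_mult power2_eq_square flip: power_mult_distrib)
  also have "\<dots> \<le> d" using half_pow_ceiling_log_le[of b] b by (simp add: s_def d_def)
  finally have "1 - w * X s \<le> 22 * d" using \<open>s \<noteq> 0\<close> by simp
  then show "1 - w * x \<le> 22 / 2 ^ b" by (simp add: x_def X_def s_def d_def)
qed

text \<open>With \<open>c = sqrt x\<close> and \<open>v = c y\<close>, an exact Newton step for \<open>1/c\<close> gives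
  \<open>1 - c y' = (1 - v)\<^sup>2 (v + 2) / 2\<close>, so the iterates increase towards \<open>1/c\<close>.\<close>
lemma invsqrt_step_bounds:
  assumes x: "0 \<le> x" and y: "1 \<le> y" "sqrt x * y \<le> 1" "trunc_bits b y = y"
  shows "y \<le> invsqrt_step b x y" "sqrt x * invsqrt_step b x y \<le> 1"
    "trunc_bits b (invsqrt_step b x y) = invsqrt_step b x y"
proof -
  define g where "g = (3 * y - x * y ^ 3) / 2"
  define c where "c = sqrt x"
  define v where "v = c * y"
  have x_eq: "x = c\<^sup>2" using x by (simp add: c_def)
  have v: "0 \<le> v" "v \<le> 1" using x y by (auto simp: v_def c_def)
  have "g - y = y * (1 - v\<^sup>2) / 2"
    by (simp add: g_def v_def x_eq field_simps power2_eq_square power3_eq_cube)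
  moreover have "0 \<le> y * (1 - v\<^sup>2) / 2" using y v by (simp add: power_le_one)
  moreover have "1 - c * g = (1 - v)\<^sup>2 * (v + 2) / 2"
    by (simp add: g_def v_def x_eq field_simps power2_eq_square power3_eq_cube)
  moreover have "0 \<le> (1 - v)\<^sup>2 * (v + 2) / 2" using v by simp
  ultimately have "y \<le> g" "sqrt x * g \<le> 1" unfolding c_def by linarith+
  moreover have "sqrt x * invsqrt_step b x y \<le> sqrt x * g"
    using x trunc_bits_le[of b g] by (intro mult_left_mono) (auto simp: invsqrt_step_def g_def)
  ultimately show "y \<le> invsqrt_step b x y" "sqrt x * invsqrt_step b x y \<le> 1"
    using y(3) trunc_bits_ge_fixpoint[of y g b] by (auto simp: invsqrt_step_def g_def)
qed (simp add: invsqrt_step_def trunc_bits_idem)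

lemma invsqrt_step_error:
  assumes x: "0 \<le> x" "x \<le> 1" and y: "sqrt x * y \<le> 1"
  shows "1 - sqrt x * invsqrt_step b x y \<le> 3 / 2 * (1 - sqrt x * y)\<^sup>2 + 1 / 2 ^ b"
proof -
  define g where "g = (3 * y - x * y ^ 3) / 2"
  define c where "c = sqrt x"
  define e where "e = 1 - c * y"
  have x_eq: "x = c\<^sup>2" using x by (simp add: c_def)
  have c: "0 \<le> c" "c \<le> 1" using x by (auto simp: c_def)
  have "c * (g - 1 / 2 ^ b) \<le> c * invsqrt_step b x y"
    using c trunc_bits_gt[of g b] by (intro mult_left_mono) (auto simp: invsqrt_step_def g_def)
  then have "c * g - c * (1 / 2 ^ b) \<le> c * invsqrt_step b x y" by (simp only: right_diff_distrib)
  moreover have "c * (1 / 2 ^ b) \<le> 1 / 2 ^ b" using c by (simp add: divide_right_mono)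
  moreover have "1 - c * g = 3 / 2 * e\<^sup>2 - e ^ 3 / 2"
    by (simp add: g_def e_def x_eq field_simps power2_eq_square power3_eq_cube)
  moreover have "0 \<le> e ^ 3" using y by (simp add: e_def c_def)
  ultimately have "1 - c * invsqrt_step b x y \<le> 3 / 2 * e\<^sup>2 + 1 / 2 ^ b"
    by linarith
  then show ?thesis by (simp add: e_def c_def)
qed

lemma invsqrt_iteration:
  fixes x :: real and b :: nat
  defines "y \<equiv> (invsqrt_step b x ^^ nat \<lceil>log 2 (real b)\<rceil>) 1"
  assumes x: "1 / 2 \<le> x" "x < 1" and b: "25 \<le> b"
  shows "1 \<le> y" "sqrt x * y \<le> 1" "1 - sqrt x * y \<le> 15 / 2 ^ b"
proof -
  define Y where "Y i = (invsqrt_step b x ^^ i) 1" for i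
  define s where "s = nat \<lceil>log 2 (real b)\<rceil>"
  have Y_Suc: "Y (Suc i) = invsqrt_step b x (Y i)" for i by (simp add: Y_def)
  have inv: "1 \<le> Y i \<and> sqrt x * Y i \<le> 1 \<and> trunc_bits b (Y i) = Y i" for i
  proof (induction i)
    case 0 show ?case using x by (simp add: Y_def trunc_bits_one)
  next
    case (Suc i) then show ?case
      using invsqrt_step_bounds[of x "Y i" b] x by (auto simp: Y_Suc)
  qed
  then show "1 \<le> y" "sqrt x * y \<le> 1" by (auto simp: y_def Y_def)
  define d :: real where "d = 1 / 2 ^ b"
  have d: "0 \<le> d" "d \<le> 1 / 10000" using power_increasing[of 25 b "2::real"] b
    by (auto simp: d_def field_simps)
  have "sqrt (49 / 100) \<le> sqrt x" using x by (intro real_sqrt_le_mono) simp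
  moreover have "sqrt (49 / 100 :: real) = 7 / 10" by (simp add: real_sqrt_divide)
  ultimately have c: "7 / 10 \<le> sqrt x" by simp
  have "3 / 2 * (1 - sqrt x * Y s) \<le> (9 / 20) ^ 2 ^ s + 21 * d"
  proof (rule quadratic_recurrence_bound[where a = "\<lambda>i. 3 / 2 * (1 - sqrt x * Y i)"])
    show "0 \<le> 3 / 2 * (1 - sqrt x * Y i)" for i using inv[of i] by simp
    show "3 / 2 * (1 - sqrt x * Y (Suc i)) \<le> (3 / 2 * (1 - sqrt x * Y i))\<^sup>2 + 2 * d" for i
    proof -
      have "1 - sqrt x * Y (Suc i) \<le> 3 / 2 * (1 - sqrt x * Y i)\<^sup>2 + d"
        using invsqrt_step_error[of x "Y i" b] inv[of i] x by (simp add: Y_Suc d_def)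
      then have "3 / 2 * (1 - sqrt x * Y (Suc i)) \<le> 9 / 4 * (1 - sqrt x * Y i)\<^sup>2 + 3 / 2 * d"
        by simp
      moreover have sq: "(3 / 2 * t)\<^sup>2 = 9 / 4 * t\<^sup>2" for t :: real by (simp add: power2_eq_square)
      ultimately show ?thesis using d unfolding sq by simp
    qed
    show "3 / 2 * (1 - sqrt x * Y 0) \<le> 9 / 20 + 21 * d" using c d by (simp add: Y_def)
  qed (use d in auto)
  also have "(9 / 20 :: real) ^ 2 ^ s \<le> (1 / 2) ^ 2 ^ s" by (intro power_mono) auto
  also have "\<dots> \<le> d" using half_pow_ceiling_log_le[of b] b by (simp add: s_def d_def)
  finally have "3 - 3 * (sqrt x * Y s) \<le> 44 * d" by simp
  then have "1 - sqrt x * Y s \<le> 15 * d" using d by linarith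
  then show "1 - sqrt x * y \<le> 15 / 2 ^ b" by (simp add: y_def Y_def s_def d_def)
qed

lemma ln_inverse_sqrt_error:
  fixes w x y E\<^sub>1 E\<^sub>2 :: real
  assumes pos: "0 < w" "0 < x" "0 < y"
    and E: "0 \<le> E\<^sub>1" "E\<^sub>1 \<le> 1 / 2" "0 \<le> E\<^sub>2" "E\<^sub>2 \<le> 1 / 2"
    and wx: "1 - E\<^sub>1 \<le> w * x" "w * x \<le> 1" and xy: "1 - E\<^sub>2 \<le> sqrt x * y" "sqrt x * y \<le> 1"
  shows "\<bar>ln y - ln w / 2\<bar> \<le> max E\<^sub>1 (2 * E\<^sub>2)"
proof -
  have "ln y - ln w / 2 = ln (sqrt x * y) - ln (w * x) / 2"
    using pos by (simp add: ln_mult ln_sqrt) (simp add: field_simps)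
  moreover have "ln (1 - E\<^sub>1) \<le> ln (w * x)" "ln (w * x) \<le> 0"
    using pos E wx by auto
  moreover have "ln (1 - E\<^sub>2) \<le> ln (sqrt x * y)" "ln (sqrt x * y) \<le> 0"
    using pos E xy by auto
  ultimately have "ln y - ln w / 2 \<le> E\<^sub>1" "ln w / 2 - ln y \<le> 2 * E\<^sub>2"
    using minus_ln_one_minus_le[of E\<^sub>1] minus_ln_one_minus_le[of E\<^sub>2] E by linarith+
  then show ?thesis by (auto simp: abs_le_iff le_max_iff_disj)
qed

lemma SQRT_eq_iterates:
  fixes w :: real and b :: nat
  defines "s \<equiv> nat \<lceil>log 2 (real b)\<rceil>"
  defines "x \<equiv> (reciprocal_step b w ^^ s) (1 / 2)"
  assumes w: "1 < w" "w < 2" and b: "25 \<le> b"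
  shows "SQRT b w = (invsqrt_step b x ^^ s) 1"
proof -
  have x: "1 / 2 \<le> x" "x < 1"
    using reciprocal_iteration[of w b] w b divide_less_eq_1[of 1 w] unfolding x_def s_def
    by (auto intro: order.strict_trans1)
  have the_q: "(THE q :: nat. 2 powr (1 - real q) > x \<and> x \<ge> 2 powr (- real q)) = 1"
  proof (rule the_equality)
    fix q :: nat assume q: "2 powr (1 - real q) > x \<and> x \<ge> 2 powr (- real q)"
    have "2 powr (- 1) < 2 powr (1 - real q)" using q x by (simp add: powr_minus_divide)
    moreover have "2 powr (- real q) < 1" using q x by linarith
    then have "2 powr (- real q) < 2 powr 0" by simp
    ultimately show "q = 1" by (subst (asm) (1 2) powr_less_cancel_iff) auto
  qed (use x in \<open>simp add: powr_minus_divide\<close>)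
  have reciprocal_eq: "(\<lambda>x. trunc_bits b (- w * x\<^sup>2 + 2 * x)) = reciprocal_step b w"
    by (simp add: fun_eq_iff reciprocal_step_def)
  have invsqrt_eq: "(\<lambda>y. trunc_bits b ((3 * y - z * y ^ 3) / 2)) = invsqrt_step b z" for z
    by (simp add: fun_eq_iff invsqrt_step_def)
  show ?thesis
    unfolding SQRT_def Let_def reciprocal_eq invsqrt_eq
    using w the_binary_exponent[of 1 w] the_q by (simp add: s_def x_def)
qed

lemma SQRT_bounds:
  fixes w :: real
  assumes w: "1 \<le> w" "w < 2" and b: "25 \<le> b"
  shows "1 \<le> SQRT b w" "SQRT b w < 2" "\<bar>ln (SQRT b w) - ln w / 2\<bar> \<le> 30 / 2 ^ b"
proof -
  consider "w = 1" | "1 < w" using w by linarith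
  then have "1 \<le> SQRT b w \<and> SQRT b w < 2 \<and> \<bar>ln (SQRT b w) - ln w / 2\<bar> \<le> 30 / 2 ^ b"
  proof cases
    case 1 then show ?thesis by (simp add: SQRT_def)
  next
    case 2
    define s where "s = nat \<lceil>log 2 (real b)\<rceil>"
    define x where "x = (reciprocal_step b w ^^ s) (1 / 2)"
    define y where "y = (invsqrt_step b x ^^ s) 1"
    have x: "1 / 2 \<le> x" "x \<le> 1 / w" "1 - w * x \<le> 22 / 2 ^ b"
      using reciprocal_iteration[of w b] w b by (auto simp: x_def s_def)
    have "x < 1" using x(2) divide_less_eq_1[of 1 w] 2 by linarith
    have y: "1 \<le> y" "sqrt x * y \<le> 1" "1 - sqrt x * y \<le> 15 / 2 ^ b"
      using invsqrt_iteration[of x b] \<open>x < 1\<close> x b by (auto simp: y_def s_def)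
    have "sqrt (1 / 4) < sqrt x" using x by (intro real_sqrt_less_mono) simp
    then have "(1 / 2) * y < sqrt x * y"
      using y by (intro mult_strict_right_mono) (auto simp: real_sqrt_divide)
    then have "y < 2" using y(2) by linarith
    moreover have "\<bar>ln y - ln w / 2\<bar> \<le> max (22 / 2 ^ b) (2 * (15 / 2 ^ b))"
    proof (rule ln_inverse_sqrt_error)
      have "(2::real) ^ 25 \<le> 2 ^ b" using b by (intro power_increasing) auto
      then show "22 / 2 ^ b \<le> (1 / 2 :: real)" "15 / 2 ^ b \<le> (1 / 2 :: real)"
        by (simp_all add: field_simps)
      show "w * x \<le> 1" using x(2) w by (simp add: field_simps)
    qed (use w x y in auto)
    moreover have "22 / 2 ^ b \<le> (30 / 2 ^ b :: real)" by (simp add: divide_right_mono)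
    moreover have "SQRT b w = y" using SQRT_eq_iterates[OF 2 w(2) b] by (simp add: s_def x_def y_def)
    ultimately show ?thesis using y(1) by (simp add: max_absorb2)
  qed
  then show "1 \<le> SQRT b w" "SQRT b w < 2" "\<bar>ln (SQRT b w) - ln w / 2\<bar> \<le> 30 / 2 ^ b" by auto
qed

lemma PowerOf2Roots_bounds:
  fixes x :: real
  assumes x: "1 \<le> x" "x < 2" and b: "25 \<le> b"
  shows "1 \<le> PowerOf2Roots b x i \<and> PowerOf2Roots b x i < 2 \<and>
         \<bar>2 ^ i * ln (PowerOf2Roots b x i) - ln x\<bar> \<le> 2 ^ i * 60 / 2 ^ b"
proof (induction i)
  case 0 then show ?case using x by (simp add: PowerOf2Roots_def)
next
  case (Suc i)
  define t where "t = PowerOf2Roots b x i"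
  have t: "1 \<le> t" "t < 2" "\<bar>2 ^ i * ln t - ln x\<bar> \<le> 2 ^ i * 60 / 2 ^ b"
    using Suc by (auto simp: t_def)
  have t': "PowerOf2Roots b x (Suc i) = SQRT b t" by (simp add: PowerOf2Roots_def t_def)
  have "2 ^ Suc i * ln (SQRT b t) - ln x
      = 2 ^ Suc i * (ln (SQRT b t) - ln t / 2) + (2 ^ i * ln t - ln x)"
    by (simp add: algebra_simps)
  then have "\<bar>2 ^ Suc i * ln (SQRT b t) - ln x\<bar>
      \<le> 2 ^ Suc i * \<bar>ln (SQRT b t) - ln t / 2\<bar> + \<bar>2 ^ i * ln t - ln x\<bar>"
    by (metis abs_mult abs_of_nonneg abs_triangle_ineq zero_le_numeral zero_le_power)
  also have "\<dots> \<le> 2 ^ Suc i * (30 / 2 ^ b) + 2 ^ i * 60 / 2 ^ b"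
    using SQRT_bounds(3)[OF t(1,2) b] t(3) by (intro add_mono mult_left_mono) auto
  also have "\<dots> = 2 ^ Suc i * 60 / 2 ^ b" by simp
  finally have "\<bar>2 ^ Suc i * ln (SQRT b t) - ln x\<bar> \<le> 2 ^ Suc i * 60 / 2 ^ b" .
  then show ?case using SQRT_bounds(1,2)[OF t(1,2) b] by (simp add: t')
qed

text \<open>The value \<open>z\<^sub>p\<close> of Algorithm LN as a function of the mantissa \<open>x = w\<^sub>p\<close>.\<close>
definition LN_reduced :: "nat \<Rightarrow> nat \<Rightarrow> real \<Rightarrow> real" where
  "LN_reduced b l x =
    (if x = 1 then 0
     else 2 ^ l * trunc_bits b ((PowerOf2Roots b x l - 1) - (PowerOf2Roots b x l - 1)\<^sup>2 / 2))"

lemma two_pow_div_two_pow_le: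
  assumes "25 \<le> b" "5 * l \<le> b"
  shows "(2::real) ^ l / 2 ^ b \<le> (1 / 16) ^ l" "(2::real) ^ l / 2 ^ b \<le> 1 / 1000"
proof -
  have "(2::real) ^ l / 2 ^ b = (1 / 2) ^ (b - l)" using assms by (simp add: power_diff power_one_over)
  moreover have "(1 / 2 :: real) ^ (b - l) \<le> (1 / 2) ^ (4 * l)" "(1 / 2 :: real) ^ (b - l) \<le> (1 / 2) ^ 20"
    using assms by (simp_all add: power_decreasing)
  moreover have "(1 / 2 :: real) ^ (4 * l) = (1 / 16) ^ l" by (simp add: power_mult power_one_over)
  moreover have "(1 / 2 :: real) ^ 20 \<le> 1 / 1000" by (simp add: power_one_over)
  ultimately show "(2::real) ^ l / 2 ^ b \<le> (1 / 16) ^ l" "(2::real) ^ l / 2 ^ b \<le> 1 / 1000"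
    by linarith+
qed

lemma scaled_cube_le:
  fixes u :: real assumes "2 ^ l * u \<le> 3" "0 \<le> u" shows "2 ^ l * (u ^ 3 / 3) \<le> 9 * (1 / 4) ^ l"
proof -
  have "((2::real) ^ l) ^ 3 * (1 / 4) ^ l = (2 ^ 3) ^ l * (1 / 4) ^ l"
    by (metis power_mult mult.commute)
  also have "\<dots> = 2 ^ l" by (simp flip: power_mult_distrib)
  finally have "2 ^ l * (u ^ 3 / 3) = (2 ^ l * u) ^ 3 / 3 * (1 / 4) ^ l"
    by (simp add: power_mult_distrib)
  moreover have "(2 ^ l * u) ^ 3 \<le> 3 ^ 3" using assms by (intro power_mono) auto
  ultimately show ?thesis by simp
qed

lemma LN_reduced_error:
  fixes x :: real
  assumes x: "1 \<le> x" "x < 2" and b: "25 \<le> b" "5 * l \<le> b"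
  shows "\<bar>LN_reduced b l x - ln x\<bar> \<le> 70 * (1 / 4) ^ l"
proof (cases "x = 1")
  case True then show ?thesis by (simp add: LN_reduced_def)
next
  case False
  define d :: real where "d = 1 / 2 ^ b"
  define t where "t = PowerOf2Roots b x l"
  define u where "u = t - 1"
  define y where "y = u - u\<^sup>2 / 2"
  have t: "1 \<le> t" "t < 2" "\<bar>2 ^ l * ln t - ln x\<bar> \<le> 60 * (2 ^ l * d)"
    using PowerOf2Roots_bounds[OF x b(1), of l] by (auto simp: t_def d_def mult.commute)
  have u: "0 \<le> u" "ln t = ln (1 + u)" using t by (auto simp: u_def)
  have small: "2 ^ l * d \<le> (1 / 16) ^ l" "2 ^ l * d \<le> 1 / 1000"
    using two_pow_div_two_pow_le[OF b] by (simp_all add: d_def)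
  have "ln x < ln 2" using x by simp
  then have ln_t: "2 ^ l * ln t \<le> 3 / 2" using abs_le_D1[OF t(3)] small(2) ln_2_less_1 by linarith
  have "t * ln t \<le> 2 * ln t" using t by (intro mult_right_mono) auto
  then have "u \<le> 2 * ln t" using diff_one_le_mult_ln[OF t(1)] by (simp add: u_def)
  then have "2 ^ l * u \<le> 2 * (2 ^ l * ln t)" using mult_left_mono[of u "2 * ln t" "2 ^ l"] by simp
  then have "2 ^ l * u \<le> 3" using ln_t by linarith
  then have cubic: "2 ^ l * (u ^ 3 / 3) \<le> 9 * (1 / 4) ^ l" using u(1) by (rule scaled_cube_le)
  have taylor: "\<bar>2 ^ l * (y - ln t)\<bar> \<le> 2 ^ l * (u ^ 3 / 3)"
    using ln_add_one_ge[OF u(1)] ln_add_one_le[OF u(1)] u(2) by (simp add: y_def abs_mult abs_le_iff)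
  have rounding: "\<bar>2 ^ l * (trunc_bits b y - y)\<bar> \<le> 2 ^ l * d"
    using mult_left_mono[OF trunc_bits_error[of b y], of "2 ^ l"] by (simp add: abs_mult d_def)
  have "LN_reduced b l x - ln x = 2 ^ l * (trunc_bits b y - y) + 2 ^ l * (y - ln t) + (2 ^ l * ln t - ln x)"
    using False by (simp add: LN_reduced_def t_def [symmetric] y_def u_def algebra_simps)
  then have "\<bar>LN_reduced b l x - ln x\<bar> \<le> 61 * (1 / 16) ^ l + 9 * (1 / 4) ^ l"
    using rounding taylor cubic t(3) small(1) by linarith
  also have "(1 / 16 :: real) ^ l \<le> (1 / 4) ^ l" by (intro power_mono) auto
  finally show ?thesis by simp
qed

lemma LN_eq_LN_reduced:
  assumes "1 < w" "2 ^ (p - 1) \<le> w" "w < 2 ^ p"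
  shows "LN w l r = LN_reduced (max (5 * l) 25) l (2 powr (1 - real p) * w) + (real p - 1) * r"
  using assms(1) unfolding LN_def Let_def the_binary_exponent[OF assms(2,3)] LN_reduced_def by simp

lemma binary_mantissa:
  fixes w :: real
  assumes "2 ^ (p - 1) \<le> w" "w < 2 ^ p"
  shows "1 \<le> 2 powr (1 - real p) * w" "2 powr (1 - real p) * w < 2"
    "ln w = (real p - 1) * ln 2 + ln (2 powr (1 - real p) * w)"
proof -
  have "p \<noteq> 0" using assms by (cases p) auto
  then have scale: "2 powr (1 - real p) = 1 / 2 ^ (p - 1)" and "(2::real) ^ p = 2 * 2 ^ (p - 1)"
    by (simp_all add: powr_diff powr_realpow power_diff)
  then show "1 \<le> 2 powr (1 - real p) * w" "2 powr (1 - real p) * w < 2"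
    using assms unfolding scale by (simp_all add: field_simps)
  have "0 < (2::real) ^ (p - 1)" by simp
  then have "0 < w" using assms(1) by linarith
  then show "ln w = (real p - 1) * ln 2 + ln (2 powr (1 - real p) * w)"
    using \<open>p \<noteq> 0\<close> by (simp add: scale ln_div ln_realpow of_nat_diff)
qed

lemma sum_two_powr_interval:
  fixes M :: int
  shows "(\<Sum>j\<in>{M - int k .. M - 1}. (2::real) powr (real_of_int j)) = 2 powr M - 2 powr (M - int k)"
proof (induction k)
  case 0 then show ?case by simp
next
  case (Suc k)
  have "{M - int (Suc k) .. M - 1} = insert (M - int (Suc k)) {M - int k .. M - 1}" by auto
  then have "(\<Sum>j\<in>{M - int (Suc k) .. M - 1}. (2::real) powr (real_of_int j))
      = 2 powr (M - int (Suc k)) + (2 powr M - 2 powr (M - int k))"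
    using Suc by simp
  also have "(2::real) powr (M - int k) = 2 * 2 powr (M - int (Suc k))"
    using powr_add[of 2 1 "M - int (Suc k)"] by simp
  finally show ?case by simp
qed

lemma fixed_repr_less_two_pow: assumes "fixed_repr n m w" shows "w < 2 ^ m"
proof -
  obtain d :: "int \<Rightarrow> real" where d: "\<forall>j. d j \<in> {0, 1}"
    and w: "w = (\<Sum>j\<in>{int m - int n .. int m - 1}. d j * 2 powr (real_of_int j))"
    using assms unfolding fixed_repr_def by blast
  have "w \<le> (\<Sum>j\<in>{int m - int n .. int m - 1}. 2 powr (real_of_int j))"
    unfolding w
  proof (rule sum_mono)
    show "d j * 2 powr real_of_int j \<le> 2 powr real_of_int j" for j using d[rule_format, of j] by auto
  qed
  also have "\<dots> = 2 powr (int m) - 2 powr (int m - int n)" by (rule sum_two_powr_interval)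
  also have "\<dots> < 2 ^ m" by (simp add: powr_realpow)
  finally show ?thesis .
qed

lemma quarter_pow_le: "(1 / 4 :: real) ^ l \<le> (3 / 4) powr (5 * real l / 2)"
proof -
  have "(1 / 4 :: real) ^ l \<le> (27 / 64) ^ l" by (intro power_mono) auto
  also have "(27 / 64 :: real) ^ l = (3 / 4) powr (real (3 * l))"
    by (subst powr_realpow) (simp_all add: power_mult power_divide)
  also have "\<dots> \<le> (3 / 4) powr (5 * real l / 2)" by (intro powr_mono') auto
  finally show ?thesis .
qed

lemma LN_error:
  fixes w r :: real
  assumes w: "1 < w" "2 ^ (p - 1) \<le> w" "w < 2 ^ p"
    and r: "\<bar>r - ln 2\<bar> \<le> 2 powr (- real (max (5 * l) 25))"
  shows "\<bar>LN w l r - ln w\<bar> \<le> (real p - 1 + 70) * (1 / 4) ^ l"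
proof -
  define b where "b = max (5 * l) 25"
  define x where "x = 2 powr (1 - real p) * w"
  have x: "1 \<le> x" "x < 2" "ln w = (real p - 1) * ln 2 + ln x"
    using binary_mantissa[OF w(2,3)] by (simp_all add: x_def)
  have "(1 / 2 :: real) ^ b \<le> (1 / 2) ^ (2 * l)" by (intro power_decreasing) (auto simp: b_def)
  then have "\<bar>r - ln 2\<bar> \<le> (1 / 4) ^ l"
    using r by (simp add: b_def powr_minus_divide powr_realpow power_mult power_one_over)
  moreover have "p \<noteq> 0" using w by (cases p) auto
  ultimately have "\<bar>(real p - 1) * (r - ln 2)\<bar> \<le> (real p - 1) * (1 / 4) ^ l"
    unfolding abs_mult by (simp add: mult_left_mono)
  moreover have "\<bar>LN_reduced b l x - ln x\<bar> \<le> 70 * (1 / 4) ^ l"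
    using LN_reduced_error[OF x(1,2)] by (simp add: b_def)
  moreover have "LN w l r - ln w = (LN_reduced b l x - ln x) + (real p - 1) * (r - ln 2)"
    using LN_eq_LN_reduced[OF w, of l r, folded b_def x_def] x(3) by (simp add: algebra_simps)
  ultimately show ?thesis by (simp add: algebra_simps)
qed

theorem theorem3:
  fixes n m l :: nat and w r :: real
  assumes "real_of_int \<lceil>log 2 (8 * real n)\<rceil> \<le> real l"
    and "w > 1"
    and "fixed_repr n m w"
    and "\<bar>r - ln 2\<bar> \<le> 2 powr (- real (max (5 * l) 25))"
  shows "\<bar>LN w l r - ln w\<bar>
           \<le> (3 / 4) powr (5 * real l / 2)
              * (real m + 32 / 9 + 2 * (32 / 9 + real n / ln 2) ^ 3)"
proof -
  obtain p where p: "2 ^ (p - 1) \<le> w" "w < 2 ^ p"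
    using binary_exponent_exists[of w] assms(2) by auto
  have "(2::real) ^ (p - 1) < 2 ^ m" using p(1) fixed_repr_less_two_pow[OF assms(3)] by linarith
  then have "real p - 1 \<le> real m" by (simp add: power_strict_increasing_iff)
  have "\<bar>LN w l r - ln w\<bar> \<le> (real p - 1 + 70) * (1 / 4) ^ l"
    using LN_error[OF assms(2) p assms(4)] .
  also have "\<dots> \<le> (real m + 70) * (3 / 4) powr (5 * real l / 2)"
    using \<open>real p - 1 \<le> real m\<close> quarter_pow_le[of l] by (intro mult_mono) auto
  also have "\<dots> \<le> (3 / 4) powr (5 * real l / 2) * (real m + 32 / 9 + 2 * (32 / 9 + real n / ln 2) ^ 3)"
  proof -
    have "(32 / 9 :: real) ^ 3 \<le> (32 / 9 + real n / ln 2) ^ 3" by (intro power_mono) auto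
    then show ?thesis by (simp add: mult.commute power3_eq_cube mult_left_mono)
  qed
  finally show ?thesis .
qed

end
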